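(* Let $\lambda\neq0$. For every integer $k\ge0$ and every positive integer $N$, $$\frac12\sum_{n=0}^{k+N}E_n\lambda^n S_1(k+N,n)=(-1)^N\lambda\sum_{i=1}^{N+1}a_{i-1}(N;\lambda)\sum_{l=0}^{k}\binom{k}{l}(-1)^l(N+l-1)_l\sum_{n=0}^{k-l}2^{-i}E_n^{(i)}\lambda^nS_1(k-l,n).$$
   Context: $(x)_n=x(x-1)\cdots(x-n+1)$, $(x)_0=1$. The Euler numbers $E_n$ and higher-order Euler numbers $E_n^{(r)}$ are defined by $\frac{2}{e^t+1}=\sum_{n\ge0}E_n\frac{t^n}{n!}$ and $\left(\frac{2}{e^t+1}\right)^r=\sum_{n\ge0}E_n^{(r)}\frac{t^n}{n!}$. $S_1(n,k)$ are the (signed) Stirling numbers of the first kind, given by $\frac{(\log(1+t))^k}{k!}=\sum_{n\ge k}S_1(n,k)\frac{t^n}{n!}$. The numbers $a_i(N;\lambda)$ are defined recursively by $a_0(0;\lambda)=1/\lambda$ and, for $N\ge0$: $a_0(N+1;\lambda)=(N+\lambda)a_0(N;\lambda)$, $a_{N+1}(N+1;\lambda)=-(N+1)\lambda a_N(N;\lambda)$, $a_k(N+1;\lambda)=-k\lambda a_{k-1}(N;\lambda)+(N+(k+1)\lambda)a_k(N;\lambda)$ for $1\le k\le N$; they are the coefficients for which $\left(\frac{d}{dt}\right)^N F=\frac{(-1)^N\lambda}{(1+t)^N}\sum_{i=1}^{N+1}a_{i-1}(N;\lambda)F^i$ with $F=\frac{1}{(1+t)^\lambda+1}$. *)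

theory Defs
  imports "HOL-Computational_Algebra.Formal_Power_Series"
begin

definition falling :: "real \<Rightarrow> nat \<Rightarrow> real" where
  "falling x n = (\<Prod>i<n. x - of_nat i)"

definition euler_high :: "nat \<Rightarrow> nat \<Rightarrow> real" where
  "euler_high r n = fact n * fps_nth ((2 * inverse (fps_exp 1 + 1)) ^ r) n"

definition euler_num :: "nat \<Rightarrow> real" where
  "euler_num n = fact n * fps_nth (2 * inverse (fps_exp 1 + 1)) n"

text \<open>Signed Stirling numbers of the first kind: (log(1+t))^k/k! = sum S_1(n,k) t^n/n!.
  Note fps_ln 1 is the power series of log(1+t).\<close>
definition stirling1 :: "nat \<Rightarrow> nat \<Rightarrow> real" where
  "stirling1 n k = fact n * fps_nth ((fps_ln 1) ^ k / fps_const (fact k)) n"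

text \<open>The coefficients a_k(N;lambda); set to 0 for k > N (never used there).\<close>
fun acoef :: "real \<Rightarrow> nat \<Rightarrow> nat \<Rightarrow> real" where
  "acoef lam 0 k = (if k = 0 then 1 / lam else 0)"
| "acoef lam (Suc N) k =
     (if k = 0 then (of_nat N + lam) * acoef lam N 0
      else if k = Suc N then - (of_nat (Suc N)) * lam * acoef lam N N
      else if k \<le> N then - of_nat k * lam * acoef lam N (k - 1)
                         + (of_nat N + of_nat (k + 1) * lam) * acoef lam N k
      else 0)"

end

theory Submission
  imports Defs
begin

unbundle fps_syntax

text \<open>Write E(t) = 1/(e^t + 1), so that F(t) = E(\<lambda> log(1+t)). Since S_1(m,n)/m! is the
  m-th coefficient of log(1+t)^n/n!, the m-th coefficient of E(\<lambda> log(1+t))^i is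
  2^-i \<Sum>_n E_n^(i) \<lambda>^n S_1(m,n) / m!; so the left-hand side is (k+N)! times the (k+N)-th
  coefficient of F, i.e. k! times the k-th coefficient of the N-th derivative F^(N).
  The Riccati equation E' = E^2 - E gives (1+t) F' = \<lambda> (F^2 - F), and by induction on N
  (1+t)^N F^(N) = (-1)^N \<lambda> \<Sum>_i a_(i-1)(N;\<lambda>) F^i, the recursion for a_k(N;\<lambda>) being exactly
  what differentiating the right-hand side produces. Multiplying by
  (1+t)^-N = \<Sum>_l binom(-N,l) t^l and comparing coefficients of t^k gives the identity.\<close>

lemma prod_neg_shift_eq_falling:
  "(\<Prod>i<l. - real N - of_nat i) = (-1) ^ l * falling (of_nat (N + l) - 1) l"
proof (induction l)
  case 0
  then show ?case by (simp add: falling_def)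
next
  case (Suc l)
  have "falling (of_nat (N + Suc l) - 1) (Suc l) = of_nat (N + l) * falling (of_nat (N + l) - 1) l"
    unfolding falling_def by (subst prod.lessThan_Suc_shift) (simp add: algebra_simps)
  with Suc show ?case by (simp add: algebra_simps)
qed

lemma fact_mult_gbinomial_neg:
  assumes "l \<le> k"
  shows "fact k * ((- real N) gchoose l)
    = of_nat (k choose l) * (-1) ^ l * falling (of_nat (N + l) - 1) l * fact (k - l)"
proof -
  have "(fact k :: real) = fact l * fact (k - l) * of_nat (k choose l)"
    using binomial_fact_lemma[OF assms] by (metis of_nat_fact of_nat_mult)
  moreover have "(- real N) gchoose l = (\<Prod>i<l. - real N - of_nat i) / fact l"
    by (simp add: gbinomial_prod_rev atLeast0LessThan)
  ultimately show ?thesis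
    by (simp add: prod_neg_shift_eq_falling field_simps)
qed

lemma fact_fps_binomial_neg_mult_nth:
  fixes G :: "real fps"
  shows "fact k * (fps_binomial (- of_nat N) * G) $ k
    = (\<Sum>l=0..k. of_nat (k choose l) * (-1) ^ l * falling (of_nat (N + l) - 1) l
                   * (fact (k - l) * G $ (k - l)))"
  unfolding fps_mult_nth sum_distrib_left
  by (rule sum.cong) (simp_all add: mult.assoc[symmetric] fact_mult_gbinomial_neg)

lemma fact_fps_deriv_iter_nth:
  fixes f :: "'a :: {comm_ring_1, semiring_char_0} fps"
  shows "fact k * (fps_deriv ^^ n) f $ k = fact (k + n) * f $ (k + n)"
proof (induction n arbitrary: k)
  case 0
  then show ?case by simp
next
  case (Suc n)
  have "fact k * (fps_deriv ^^ Suc n) f $ k = fact (Suc k) * (fps_deriv ^^ n) f $ Suc k"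
    by (simp add: algebra_simps)
  also have "\<dots> = fact (k + Suc n) * f $ (k + Suc n)"
    using Suc[of "Suc k"] by simp
  finally show ?case .
qed

lemma fps_deriv_one_plus_X_power:
  "(1 + fps_X) * fps_deriv ((1 + fps_X :: 'a :: comm_ring_1 fps) ^ N) = of_nat N * (1 + fps_X) ^ N"
proof (cases N)
  case (Suc m)
  have "fps_deriv ((1 + fps_X :: 'a fps) ^ Suc m) = of_nat (Suc m) * (1 + fps_X) ^ m"
    by (simp only: fps_deriv_power' diff_Suc_1 fps_deriv_add fps_deriv_1 fps_deriv_fps_X add_0_left
        mult_1_right)
  then show ?thesis
    using Suc by (simp only: power_Suc mult_ac)
qed simp

lemma fact_fps_compose_const_mult_ln_nth:
  fixes A :: "real fps"
  shows "(\<Sum>n=0..m. fact n * A $ n * lam ^ n * stirling1 m n)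
    = fact m * (A oo (fps_const lam * fps_ln 1)) $ m"
proof -
  have summand: "fact n * A $ n * lam ^ n * stirling1 m n
      = fact m * (A $ n * (lam ^ n * (fps_ln 1 ^ n) $ m))" for n
  proof -
    have "fact n * A $ n * lam ^ n * stirling1 m n = A $ n * lam ^ n * (stirling1 m n * fact n)"
      by (simp only: mult_ac)
    also have "stirling1 m n * fact n = fact m * (fps_ln 1 ^ n) $ m"
      by (simp add: stirling1_def divide_fps_const)
    finally show ?thesis
      by (simp only: mult_ac)
  qed
  have "(A oo (fps_const lam * fps_ln 1)) $ m
      = (\<Sum>n=0..m. A $ n * (lam ^ n * (fps_ln 1 ^ n) $ m))"
    by (simp add: fps_compose_nth power_mult_distrib fps_const_power)
  then show ?thesis
    by (simp only: summand sum_distrib_left)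
qed

lemma acoef_eq_0: "N < k \<Longrightarrow> acoef lam N k = 0"
  by (induction N arbitrary: k) simp_all

lemma acoef_Suc:
  "acoef lam (Suc N) k = (if k = 0 then 0 else - of_nat k * lam * acoef lam N (k - 1))
     + (of_nat N + of_nat (k + 1) * lam) * acoef lam N k"
  by (cases "k \<le> N") (auto simp: acoef_eq_0 algebra_simps simp del: acoef.simps(1))

definition half_euler_fps :: "real fps" where
  "half_euler_fps = inverse (fps_exp 1 + 1)"

definition euler_log_fps :: "real \<Rightarrow> real fps" where
  "euler_log_fps lam = half_euler_fps oo (fps_const lam * fps_ln 1)"

lemma fps_deriv_half_euler_fps: "fps_deriv half_euler_fps = half_euler_fps ^ 2 - half_euler_fps"
proof -
  let ?E = half_euler_fps
  have nz: "(fps_exp 1 + 1 :: real fps) $ 0 \<noteq> 0" by simp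
  then have "(fps_exp 1 + 1) * ?E = 1"
    unfolding half_euler_fps_def by (simp add: inverse_mult_eq_1')
  have "fps_deriv ?E = - fps_exp 1 * ?E ^ 2"
    unfolding half_euler_fps_def using fps_inverse_deriv[OF nz] by simp
  also have "\<dots> = - (fps_exp 1 * ?E) * ?E"
    by (simp add: power2_eq_square)
  also have "fps_exp 1 * ?E = 1 - ?E"
    using \<open>(fps_exp 1 + 1) * ?E = 1\<close> by (simp add: algebra_simps)
  finally show ?thesis
    by (simp add: power2_eq_square algebra_simps)
qed

lemma fps_deriv_euler_log_fps:
  "(1 + fps_X) * fps_deriv (euler_log_fps lam)
    = fps_const lam * (euler_log_fps lam ^ 2 - euler_log_fps lam)"
proof -
  have deriv: "fps_deriv (euler_log_fps lam)
      = (euler_log_fps lam ^ 2 - euler_log_fps lam) * (fps_const lam * inverse (1 + fps_X))"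
    unfolding euler_log_fps_def
    by (simp add: fps_compose_deriv fps_deriv_half_euler_fps fps_compose_sub_distrib
        fps_compose_power fps_ln_deriv)
  have "(1 + fps_X) * fps_deriv (euler_log_fps lam)
      = fps_const lam * (euler_log_fps lam ^ 2 - euler_log_fps lam)
        * ((1 + fps_X) * inverse (1 + fps_X))"
    unfolding deriv by (simp only: mult_ac)
  also have "(1 + fps_X) * inverse (1 + fps_X :: real fps) = 1"
    by (simp add: inverse_mult_eq_1')
  finally show ?thesis
    by simp
qed

lemma fps_deriv_euler_log_fps_power:
  "(1 + fps_X) * fps_deriv (euler_log_fps lam ^ (j + 1))
    = fps_const (lam * of_nat (j + 1))
      * (euler_log_fps lam ^ (j + 2) - euler_log_fps lam ^ (j + 1))"
proof -
  let ?F = "euler_log_fps lam"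
  have "(1 + fps_X) * fps_deriv (?F ^ (j + 1))
      = of_nat (j + 1) * ?F ^ j * ((1 + fps_X) * fps_deriv ?F)"
    by (simp only: fps_deriv_power' add_diff_cancel_right' mult_ac)
  also have "\<dots> = of_nat (j + 1) * fps_const lam * (?F ^ j * (?F ^ 2 - ?F))"
    unfolding fps_deriv_euler_log_fps by (simp only: mult_ac)
  also have "?F ^ j * (?F ^ 2 - ?F) = ?F ^ (j + 2) - ?F ^ (j + 1)"
    by (simp add: algebra_simps power_add power2_eq_square)
  finally show ?thesis
    by (simp add: fps_of_nat[symmetric] mult.commute)
qed

definition acoef_series :: "real \<Rightarrow> nat \<Rightarrow> real fps" where
  "acoef_series lam N = (\<Sum>k\<le>N. fps_const (acoef lam N k) * euler_log_fps lam ^ (k + 1))"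

lemma one_plus_X_mult_fps_deriv_acoef_series:
  "(1 + fps_X) * fps_deriv (acoef_series lam N)
    = (\<Sum>k\<le>N. fps_const (acoef lam N k * (lam * of_nat (k + 1))) * euler_log_fps lam ^ (k + 2))
    - (\<Sum>k\<le>N. fps_const (acoef lam N k * (lam * of_nat (k + 1))) * euler_log_fps lam ^ (k + 1))"
proof -
  have "(1 + fps_X) * fps_deriv (acoef_series lam N)
      = (\<Sum>k\<le>N. fps_const (acoef lam N k)
           * ((1 + fps_X) * fps_deriv (euler_log_fps lam ^ (k + 1))))"
    unfolding acoef_series_def by (simp add: fps_deriv_sum sum_distrib_left algebra_simps)
  then show ?thesis
    by (simp only: fps_deriv_euler_log_fps_power right_diff_distrib mult.assoc
        fps_const_mult[symmetric] sum_subtractf)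
qed

lemma acoef_series_Suc:
  "acoef_series lam (Suc N)
    = of_nat N * acoef_series lam N - (1 + fps_X) * fps_deriv (acoef_series lam N)"
proof -
  let ?F = "euler_log_fps lam"
  let ?a = "acoef lam N"
  let ?b = "\<lambda>k. ?a k * (lam * of_nat (k + 1))"
  have lowered: "(\<Sum>k\<le>Suc N. fps_const (if k = 0 then 0 else - of_nat k * lam * ?a (k - 1)) * ?F ^ (k + 1))
      = - (\<Sum>k\<le>N. fps_const (?b k) * ?F ^ (k + 2))"
  proof -
    have "fps_const (- of_nat (Suc k) * lam * ?a k) * ?F ^ (Suc k + 1)
        = - (fps_const (?b k) * ?F ^ (k + 2))" for k
    proof -
      have "- of_nat (Suc k) * lam * ?a k = - ?b k" "Suc k + 1 = k + 2"
        by (simp_all add: algebra_simps)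
      then show ?thesis
        by (simp only: fps_const_neg[symmetric] mult_minus_left)
    qed
    then show ?thesis
      by (subst sum.atMost_Suc_shift) (simp add: sum_negf)
  qed
  have kept: "(\<Sum>k\<le>Suc N. fps_const ((of_nat N + of_nat (k + 1) * lam) * ?a k) * ?F ^ (k + 1))
      = of_nat N * acoef_series lam N + (\<Sum>k\<le>N. fps_const (?b k) * ?F ^ (k + 1))"
  proof -
    have "fps_const ((of_nat N + of_nat (k + 1) * lam) * ?a k) * ?F ^ (k + 1)
        = fps_const (of_nat N * ?a k) * ?F ^ (k + 1) + fps_const (?b k) * ?F ^ (k + 1)" for k
    proof -
      have "(of_nat N + of_nat (k + 1) * lam) * ?a k = of_nat N * ?a k + ?b k"
        by (simp add: algebra_simps)
      then show ?thesis
        by (simp only: fps_const_add[symmetric] distrib_right)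
    qed
    moreover have "of_nat N * acoef_series lam N
        = (\<Sum>k\<le>N. fps_const (of_nat N * ?a k) * ?F ^ (k + 1))"
      unfolding acoef_series_def
      by (simp only: sum_distrib_left fps_const_mult[symmetric] fps_of_nat mult.assoc)
    ultimately show ?thesis
      by (simp add: acoef_eq_0 sum.distrib del: fps_const_mult fps_const_add)
  qed
  have "acoef_series lam (Suc N)
      = (\<Sum>k\<le>Suc N. fps_const (if k = 0 then 0 else - of_nat k * lam * ?a (k - 1)) * ?F ^ (k + 1))
      + (\<Sum>k\<le>Suc N. fps_const ((of_nat N + of_nat (k + 1) * lam) * ?a k) * ?F ^ (k + 1))"
    unfolding acoef_series_def acoef_Suc
    by (simp add: fps_const_add[symmetric] distrib_right sum.distrib del: fps_const_add)
  then show ?thesis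
    unfolding lowered kept one_plus_X_mult_fps_deriv_acoef_series by (simp add: algebra_simps)
qed

lemma one_plus_X_power_mult_deriv_iter_euler_log_fps:
  assumes "lam \<noteq> 0"
  shows "(1 + fps_X) ^ N * (fps_deriv ^^ N) (euler_log_fps lam)
    = fps_const ((-1) ^ N * lam) * acoef_series lam N"
proof (induction N)
  case 0
  have "fps_const lam * fps_const (1 / lam) = (1 :: real fps)"
    using assms by (simp add: fps_const_mult[symmetric])
  then show ?case
    unfolding acoef_series_def by (simp add: mult.assoc[symmetric])
next
  case (Suc N)
  let ?P = "1 + fps_X :: real fps"
  let ?H = "(fps_deriv ^^ N) (euler_log_fps lam)"
  let ?c = "(-1) ^ N * lam"
  have "of_nat N * (?P ^ N * ?H) + ?P ^ Suc N * fps_deriv ?H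
      = ?P * (fps_deriv (?P ^ N) * ?H + ?P ^ N * fps_deriv ?H)"
    by (simp only: distrib_left mult.assoc[symmetric] fps_deriv_one_plus_X_power power_Suc)
  also have "fps_deriv (?P ^ N) * ?H + ?P ^ N * fps_deriv ?H
      = fps_const ?c * fps_deriv (acoef_series lam N)"
    using arg_cong[OF Suc.IH, of fps_deriv] by (simp add: add.commute)
  also have "?P * (fps_const ?c * fps_deriv (acoef_series lam N))
      = fps_const ?c * (?P * fps_deriv (acoef_series lam N))"
    by (rule mult.left_commute)
  finally have "?P ^ Suc N * fps_deriv ?H
      = fps_const (- ?c) * (of_nat N * acoef_series lam N - ?P * fps_deriv (acoef_series lam N))"
    unfolding Suc.IH by (simp add: algebra_simps fps_const_neg[symmetric] del: fps_const_neg)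
  then show ?case
    by (simp add: acoef_series_Suc)
qed

lemma fps_deriv_iter_euler_log_fps:
  assumes "lam \<noteq> 0"
  shows "(fps_deriv ^^ N) (euler_log_fps lam)
    = fps_binomial (- of_nat N) * (fps_const ((-1) ^ N * lam) * acoef_series lam N)"
proof -
  have "(fps_deriv ^^ N) (euler_log_fps lam)
      = (fps_binomial (- of_nat N) * (1 + fps_X) ^ N) * (fps_deriv ^^ N) (euler_log_fps lam)"
    by (simp add: fps_binomial_of_nat[symmetric] fps_binomial_add_mult[symmetric])
  then show ?thesis
    by (simp only: mult.assoc one_plus_X_power_mult_deriv_iter_euler_log_fps[OF assms])
qed

lemma sum_euler_high_stirling1:
  "(\<Sum>n=0..m. (1 / 2 ^ i) * euler_high i n * lam ^ n * stirling1 m n)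
    = fact m * (euler_log_fps lam ^ i) $ m"
proof -
  have "(2 * inverse (fps_exp 1 + 1) :: real fps) ^ i = fps_const (2 ^ i) * half_euler_fps ^ i"
    by (simp add: half_euler_fps_def power_mult_distrib fps_numeral_fps_const fps_const_power)
  then have "(1 / 2 ^ i) * euler_high i n = fact n * (half_euler_fps ^ i) $ n" for n
    unfolding euler_high_def by simp
  then show ?thesis
    by (simp add: fact_fps_compose_const_mult_ln_nth euler_log_fps_def fps_compose_power)
qed

theorem theorem4:
  fixes lam :: real and k N :: nat
  assumes "lam \<noteq> 0" and "N \<ge> 1"
  shows "(1/2) * (\<Sum>n=0..k+N. euler_num n * lam ^ n * stirling1 (k+N) n)
    = (-1) ^ N * lam * (\<Sum>i=1..N+1. acoef lam N (i-1) *
        (\<Sum>l=0..k. of_nat (k choose l) * (-1) ^ l * falling (of_nat (N+l) - 1) l *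
          (\<Sum>n=0..k-l. (1 / 2 ^ i) * euler_high i n * lam ^ n * stirling1 (k-l) n)))"
proof -
  let ?F = "euler_log_fps lam"
  let ?B = "fps_binomial (- of_nat N) :: real fps"
  have "(1/2) * (\<Sum>n=0..k+N. euler_num n * lam ^ n * stirling1 (k+N) n)
      = fact (k + N) * ?F $ (k + N)"
    using sum_euler_high_stirling1[where i = 1 and m = "k + N" and lam = lam]
    by (simp add: euler_num_def euler_high_def sum_distrib_left mult_ac)
  also have "\<dots> = fact k * (fps_deriv ^^ N) ?F $ k"
    by (simp add: fact_fps_deriv_iter_nth)
  also have "\<dots> = (-1) ^ N * lam * (\<Sum>j\<le>N. acoef lam N j * (fact k * (?B * ?F ^ (j + 1)) $ k))"
  proof -
    have deriv: "(fps_deriv ^^ N) ?F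
        = (\<Sum>j\<le>N. fps_const ((-1) ^ N * lam * acoef lam N j) * (?B * ?F ^ (j + 1)))"
      unfolding fps_deriv_iter_euler_log_fps[OF assms(1)] acoef_series_def sum_distrib_left
      by (simp only: fps_const_mult[symmetric] mult_ac)
    show ?thesis
      unfolding deriv fps_sum_nth fps_mult_left_const_nth by (simp only: sum_distrib_left mult_ac)
  qed
  also have "\<dots> = (-1) ^ N * lam * (\<Sum>i=1..N+1. acoef lam N (i-1) *
        (\<Sum>l=0..k. of_nat (k choose l) * (-1) ^ l * falling (of_nat (N+l) - 1) l *
          (\<Sum>n=0..k-l. (1 / 2 ^ i) * euler_high i n * lam ^ n * stirling1 (k-l) n)))"
    unfolding sum_euler_high_stirling1 fact_fps_binomial_neg_mult_nth atMost_atLeast0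
    by (simp only: One_nat_def add_Suc_right add_0_right sum.shift_bounds_cl_Suc_ivl
        diff_Suc_Suc diff_zero)
  finally show ?thesis .
qed

end
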